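(* Let $0<p<\infty$ and $\alpha>-1$. Let $w$ be an analytic function in $\mathbb D$ with $w\not\equiv 0$, and let $\varphi$ be an entire function with $\varphi\not\equiv 0$. Then the weighted superposition operator $S_{\varphi,w}$ maps $A^p_\alpha$ into the Bloch space $\mathcal B$ (i.e. $S_{\varphi,w}(f)\in\mathcal B$ for every $f\in A^p_\alpha$) if and only if $w\in\mathcal B$ and $\varphi$ is constant.
   Context: $\mathbb D=\{z\in\mathbb C:|z|<1\}$ and $\mathcal H(\mathbb D)$ is the space of analytic functions in $\mathbb D$. For $\varphi$ entire and $w\in\mathcal H(\mathbb D)$, the weighted superposition operator is $S_{\varphi,w}(f)(z)=w(z)\,\varphi(f(z))$ for $f\in\mathcal H(\mathbb D)$, $z\in\mathbb D$. For $0<p<\infty$, $\alpha>-1$, the weighted Bergman space $A^p_\alpha$ consists of $f\in\mathcal H(\mathbb D)$ with $\int_{\mathbb D}(1-|z|^2)^\alpha|f(z)|^p\,dA(z)<\infty$, where $dA$ is normalized area measure on $\mathbb D$. The Bloch space $\mathcal B$ consists of $f\in\mathcal H(\mathbb D)$ with $\sup_{z\in\mathbb D}(1-|z|^2)|f'(z)|<\infty$. *)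

theory Defs
  imports "HOL-Analysis.Analysis"
begin

abbreviation disc :: "complex set" where "disc \<equiv> ball 0 1"

text \<open>Weighted Bergman space A^p_alpha with respect to normalized area measure dA = dx dy / pi.\<close>
definition bergman_space :: "real \<Rightarrow> real \<Rightarrow> (complex \<Rightarrow> complex) set" where
  "bergman_space p \<alpha> = {f. f holomorphic_on disc \<and>
     (\<integral>\<^sup>+ z \<in> disc. ennreal ((1 - (cmod z)\<^sup>2) powr \<alpha> * (cmod (f z)) powr p / pi) \<partial>lborel) < \<infinity>}"

definition bloch_space :: "(complex \<Rightarrow> complex) set" where
  "bloch_space = {f. f holomorphic_on disc \<and>
     (\<exists>M. \<forall>z\<in>disc. (1 - (cmod z)\<^sup>2) * cmod (deriv f z) \<le> M)}"

definition wsup_op :: "(complex \<Rightarrow> complex) \<Rightarrow> (complex \<Rightarrow> complex) \<Rightarrow> (complex \<Rightarrow> complex) \<Rightarrow> complex \<Rightarrow> complex" where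
  "wsup_op \<phi> w f = (\<lambda>z. w z * \<phi> (f z))"

end

theory Submission
  imports Defs "HOL-Complex_Analysis.Complex_Analysis"
begin

text \<open>If \<open>\<phi> = c\<close> is constant then \<open>S(f) = c w\<close>, and testing with \<open>f = 0\<close> shows that the
  condition is exactly \<open>w \<in> \<B>\<close>. If \<open>\<phi>\<close> is not constant we build \<open>f \<in> A^p_\<alpha>\<close> as a series
  \<open>\<Sum>\<^sub>j c\<^sub>j (1 - cnj u\<^sub>j z) powr (-g\<^sub>j)\<close> with \<open>|u\<^sub>j| = 1\<close>, \<open>|c\<^sub>j| \<le> 2^-j\<close> and exponents \<open>g\<^sub>j\<close>
  increasing to \<open>\<gamma> = (1 + min \<alpha> 0) / (2p)\<close>; then \<open>|f(z)| \<le> 2 (1 - |z|)^-\<gamma>\<close>, which is small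
  enough for \<open>A^p_\<alpha>\<close>. The terms are chosen one at a time: by the maximum principle there
  are points \<open>a\<^sub>n = (1 - 2^-K) u\<^sub>n\<close> with \<open>|w(a\<^sub>n)| \<ge> |w(z\<^sub>1)| > 0\<close>, and the \<open>n\<close>-th coefficient
  moves \<open>f(a\<^sub>n)\<close> to a point where \<open>|\<phi>| \<ge> n (K + 1) - 1\<close> (a nonconstant entire function takes
  values of size \<open>\<ge> cR\<close> in every disc of radius \<open>R + \<rho>\<close>). So \<open>|w \<phi>(f)|\<close> outgrows every
  multiple of \<open>K\<close> at radius \<open>1 - 2^-K\<close>, while a Bloch function grows at most like \<open>M K\<close>
  there.\<close>

section \<open>Functions of controlled growth in weighted Bergman spaces\<close>

lemma emeasure_lborel_ball_complex:
  "r \<ge> 0 \<Longrightarrow> emeasure lborel (ball (0::complex) r) = ennreal (pi * r\<^sup>2)"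
  using emeasure_ball[of r "0::complex"] by (simp add: unit_ball_vol_2)

lemma emeasure_lborel_annulus_complex:
  fixes a b :: real
  assumes "0 \<le> b" "b \<le> a"
  shows "emeasure lborel (ball (0::complex) a - ball 0 b) = ennreal (pi * (a\<^sup>2 - b\<^sup>2))"
proof -
  have "ball (0::complex) b \<subseteq> ball 0 a"
    using assms by auto
  then have "emeasure lborel (ball (0::complex) a - ball 0 b)
      = emeasure lborel (ball (0::complex) a) - emeasure lborel (ball (0::complex) b)"
    using emeasure_lborel_ball_finite[of "0::complex" b] by (intro emeasure_Diff) auto
  also have "\<dots> = ennreal (pi * a\<^sup>2 - pi * b\<^sup>2)"
    using assms by (simp add: emeasure_lborel_ball_complex ennreal_minus)
  finally show ?thesis
    by (simp add: algebra_simps)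
qed

lemma emeasure_lborel_dyadic_annulus_le:
  "emeasure lborel (ball (0::complex) (1 - (1/2)^Suc k) - ball 0 (1 - (1/2)^k))
     \<le> ennreal (2 * pi * (1/2)^Suc k)"
proof -
  define a b where "a = 1 - (1/2::real)^Suc k" and "b = 1 - (1/2::real)^k"
  have "0 \<le> b" "b \<le> a"
    by (auto simp: a_def b_def power_le_one)
  have "a\<^sup>2 - b\<^sup>2 = (a - b) * (a + b)"
    by (simp add: power2_eq_square algebra_simps)
  also have "a - b = (1/2)^Suc k"
    by (simp add: a_def b_def)
  also have "a + b \<le> 2"
    by (simp add: a_def b_def)
  finally have "pi * (a\<^sup>2 - b\<^sup>2) \<le> 2 * pi * (1/2)^Suc k"
    by simp
  then show ?thesis
    using emeasure_lborel_annulus_complex[OF \<open>0 \<le> b\<close> \<open>b \<le> a\<close>]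
    by (simp add: a_def b_def ennreal_leI)
qed

lemma dyadic_annulus_index:
  fixes x :: real
  assumes "0 \<le> x" "x < 1"
  obtains k where "1 - (1/2)^k \<le> x" "x < 1 - (1/2)^Suc k"
proof -
  have ex: "\<exists>k. x < 1 - (1/2::real)^Suc k"
  proof -
    obtain n where "(1/2::real)^n < 1 - x"
      using real_arch_pow_inv[of "1 - x" "1/2"] assms by auto
    moreover have "(1/2::real)^Suc n \<le> (1/2)^n"
      by (intro power_decreasing) auto
    ultimately show ?thesis
      by (intro exI[of _ n]) linarith
  qed
  define k where "k = (LEAST k. x < 1 - (1/2::real)^Suc k)"
  have "x < 1 - (1/2)^Suc k"
    unfolding k_def by (rule LeastI_ex[OF ex])
  moreover have "1 - (1/2)^k \<le> x"
  proof (cases k)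
    case (Suc m)
    then have "\<not> x < 1 - (1/2)^Suc m"
      using not_less_Least[of m "\<lambda>k. x < 1 - (1/2::real)^Suc k"] k_def by auto
    then show ?thesis
      using Suc by simp
  qed (use assms in simp)
  ultimately show ?thesis
    using that by blast
qed

text \<open>Cover the disc by the dyadic annuli \<open>1 - 2^-k \<le> |z| < 1 - 2^-(k+1)\<close>: on the \<open>k\<close>-th one
  the integrand is at most \<open>2^-(k+1)\<beta>\<close> and the area at most \<open>2\<pi> 2^-(k+1)\<close>, which gives a
  geometric series with ratio \<open>2^-(\<beta>+1) < 1\<close>.\<close>
lemma nn_integral_disc_boundary_distance_powr_finite:
  fixes \<beta> :: real
  assumes "-1 < \<beta>" "\<beta> \<le> 0"
  shows "(\<integral>\<^sup>+ z. ennreal ((1 - cmod z) powr \<beta>) * indicator disc z \<partial>lborel) < \<infinity>"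
proof -
  define A where "A k = ball (0::complex) (1 - (1/2)^Suc k) - ball 0 (1 - (1/2)^k)" for k
  define C where "C k = ((1/2::real)^Suc k) powr \<beta>" for k
  define q where "q = (1/2::real) powr (\<beta> + 1)"
  have "q < 1"
    unfolding q_def using assms(1) powr_less_mono'[of "1/2" 0 "\<beta> + 1"] by simp
  have [measurable]: "A k \<in> sets borel" for k
    unfolding A_def by (intro sets.Diff) auto
  have dominated: "ennreal ((1 - cmod z) powr \<beta>) * indicator disc z
      \<le> (\<Sum>k. ennreal (C k) * indicator (A k) z)" for z
  proof (cases "z \<in> disc")
    case True
    then obtain k where k: "1 - (1/2)^k \<le> cmod z" "cmod z < 1 - (1/2)^Suc k"
      using dyadic_annulus_index[of "cmod z"] by auto
    have "(1 - cmod z) powr \<beta> \<le> C k"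
      unfolding C_def by (rule powr_mono2') (use assms k in auto)
    then have "ennreal ((1 - cmod z) powr \<beta>) * indicator disc z \<le> ennreal (C k) * indicator (A k) z"
      using True k by (auto simp: A_def intro: ennreal_leI)
    also have "\<dots> \<le> (\<Sum>k. ennreal (C k) * indicator (A k) z)"
      using sum_le_suminf[OF summableI, of "{k}"] by simp
    finally show ?thesis .
  qed simp
  have annulus_term: "ennreal (C k) * emeasure lborel (A k) \<le> ennreal (2 * pi * q^Suc k)" for k
  proof -
    have "C k * (1/2)^Suc k = ((1/2::real)^Suc k) powr (\<beta> + 1)"
      by (simp add: C_def powr_add)
    also have "\<dots> = ((1/2::real) powr real (Suc k)) powr (\<beta> + 1)"
      by (subst powr_realpow) auto
    also have "\<dots> = q^Suc k"
      unfolding q_def powr_powr by (subst powr_power) (auto simp: mult.commute)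
    finally have "C k * (1/2)^Suc k = q^Suc k" .
    then have "ennreal (C k) * ennreal (2 * pi * (1/2)^Suc k) = ennreal (2 * pi * q^Suc k)"
      by (simp add: C_def ennreal_mult'[symmetric] algebra_simps)
    then show ?thesis
      using mult_left_mono[OF emeasure_lborel_dyadic_annulus_le[of k], of "ennreal (C k)"]
      by (simp add: A_def)
  qed
  have "(\<integral>\<^sup>+ z. ennreal ((1 - cmod z) powr \<beta>) * indicator disc z \<partial>lborel)
      \<le> (\<integral>\<^sup>+ z. (\<Sum>k. ennreal (C k) * indicator (A k) z) \<partial>lborel)"
    by (intro nn_integral_mono dominated)
  also have "\<dots> = (\<Sum>k. ennreal (C k) * emeasure lborel (A k))"
    by (subst nn_integral_suminf) (auto intro!: suminf_cong nn_integral_cmult_indicator)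
  also have "\<dots> \<le> (\<Sum>k. ennreal (2 * pi * q^Suc k))"
    by (intro suminf_le summableI annulus_term)
  also have "\<dots> = ennreal (\<Sum>k. 2 * pi * q^Suc k)"
    using \<open>q < 1\<close> by (intro suminf_ennreal2)
      (auto intro!: summable_mult summable_geometric simp: q_def power_Suc)
  finally show ?thesis
    by (simp add: order_le_less_trans)
qed

lemma one_minus_square_powr_le:
  fixes r \<alpha> :: real
  assumes "0 \<le> r" "r < 1"
  shows "(1 - r\<^sup>2) powr \<alpha> \<le> (1 - r) powr min \<alpha> 0"
proof (cases "\<alpha> \<ge> 0")
  case True
  then show ?thesis
    using assms by (auto intro: powr_le1 simp: power_le_one)
next
  case False
  then show ?thesis
    using assms by (auto intro!: powr_mono2' simp: power2_eq_square mult_left_le_one_le)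
qed

lemma bergman_spaceI_growth:
  fixes p \<alpha> \<gamma> B :: real and f :: "complex \<Rightarrow> complex"
  assumes p: "0 < p" and \<alpha>: "\<alpha> > -1" and hol: "f holomorphic_on disc"
    and \<gamma>: "0 \<le> \<gamma>" "\<gamma> * p \<le> (1 + min \<alpha> 0) / 2" and "0 \<le> B"
    and bound: "\<And>z. z \<in> disc \<Longrightarrow> cmod (f z) \<le> B * (1 - cmod z) powr (-\<gamma>)"
  shows "f \<in> bergman_space p \<alpha>"
proof -
  define \<beta> where "\<beta> = min \<alpha> 0 - \<gamma> * p"
  define K where "K = B powr p / pi"
  have \<beta>: "-1 < \<beta>" "\<beta> \<le> 0"
    using \<gamma> \<alpha> p by (auto simp: \<beta>_def min_le_iff_disj)
  have pointwise: "ennreal ((1 - (cmod z)\<^sup>2) powr \<alpha> * cmod (f z) powr p / pi) * indicator disc z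
      \<le> ennreal K * (ennreal ((1 - cmod z) powr \<beta>) * indicator disc z)" for z
  proof (cases "z \<in> disc")
    case True
    then have pos: "0 < 1 - cmod z"
      by simp
    have "cmod (f z) powr p \<le> (B * (1 - cmod z) powr (-\<gamma>)) powr p"
      using bound[OF True] p by (intro powr_mono2) auto
    also have "\<dots> = B powr p * (1 - cmod z) powr (- \<gamma> * p)"
      using \<open>0 \<le> B\<close> pos by (simp add: powr_mult powr_powr)
    finally have "(1 - (cmod z)\<^sup>2) powr \<alpha> * cmod (f z) powr p / pi
        \<le> (1 - cmod z) powr min \<alpha> 0 * (B powr p * (1 - cmod z) powr (- \<gamma> * p)) / pi"
      using one_minus_square_powr_le[of "cmod z" \<alpha>] True
      by (intro divide_right_mono mult_mono) auto
    also have "\<dots> = K * (1 - cmod z) powr \<beta>"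
      using pos by (simp add: K_def \<beta>_def powr_add[symmetric] algebra_simps)
    finally show ?thesis
      using True by (simp add: ennreal_mult'[symmetric] ennreal_leI K_def)
  qed simp
  have [measurable]: "disc \<in> sets borel"
    by simp
  have "(\<integral>\<^sup>+ z \<in> disc. ennreal ((1 - (cmod z)\<^sup>2) powr \<alpha> * cmod (f z) powr p / pi) \<partial>lborel)
      \<le> (\<integral>\<^sup>+ z. ennreal K * (ennreal ((1 - cmod z) powr \<beta>) * indicator disc z) \<partial>lborel)"
    by (intro nn_integral_mono pointwise)
  also have "\<dots> = ennreal K * (\<integral>\<^sup>+ z. ennreal ((1 - cmod z) powr \<beta>) * indicator disc z \<partial>lborel)"
    by (intro nn_integral_cmult) measurable
  also have "\<dots> < \<infinity>"
    using nn_integral_disc_boundary_distance_powr_finite[OF \<beta>]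
    by (simp add: ennreal_mult_less_top)
  finally show ?thesis
    using hol unfolding bergman_space_def by auto
qed

section \<open>Radial growth of Bloch functions\<close>

definition dyadic_point :: "nat \<Rightarrow> complex \<Rightarrow> complex" where
  "dyadic_point K u = of_real (1 - (1/2)^K) * u"

lemma norm_dyadic_point: "cmod u = 1 \<Longrightarrow> cmod (dyadic_point K u) = 1 - (1/2)^K"
  unfolding dyadic_point_def norm_mult norm_of_real by (simp add: power_le_one)

lemma dyadic_point_in_disc: "cmod u = 1 \<Longrightarrow> dyadic_point K u \<in> disc"
  by (simp add: norm_dyadic_point)

lemma norm_dyadic_point_diff:
  assumes "cmod u = 1"
  shows "cmod (dyadic_point (Suc k) u - dyadic_point k u) = (1/2)^Suc k"
proof -
  have "dyadic_point (Suc k) u - dyadic_point k u = of_real ((1 - (1/2)^Suc k) - (1 - (1/2)^k)) * u"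
    unfolding dyadic_point_def by (simp only: of_real_diff left_diff_distrib)
  also have "(1 - (1/2)^Suc k) - (1 - (1/2)^k) = (1/2::real)^Suc k"
    by simp
  finally show ?thesis
    using assms by (simp only: norm_mult norm_of_real) simp
qed

text \<open>On the segment from \<open>(1 - 2^-k) u\<close> to \<open>(1 - 2^-(k+1)) u\<close> the Bloch bound gives
  \<open>|g'| \<le> M 2^(k+1)\<close>, and the segment has length \<open>2^-(k+1)\<close>.\<close>
lemma bloch_dyadic_step_le:
  assumes hol: "g holomorphic_on disc"
    and M: "\<And>z. z \<in> disc \<Longrightarrow> (1 - (cmod z)\<^sup>2) * cmod (deriv g z) \<le> M"
    and u: "cmod u = 1"
  shows "cmod (g (dyadic_point (Suc k) u) - g (dyadic_point k u)) \<le> M"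
proof -
  define S where "S = closed_segment (dyadic_point (Suc k) u) (dyadic_point k u)"
  have S_norm: "cmod z \<le> 1 - (1/2)^Suc k" if "z \<in> S" for z
  proof -
    have "S \<subseteq> cball 0 (1 - (1/2)^Suc k)"
      unfolding S_def using u
      by (intro closed_segment_subset) (auto simp: norm_dyadic_point power_le_one)
    then show ?thesis
      using that by auto
  qed
  have S_disc: "S \<subseteq> disc"
  proof
    fix z assume "z \<in> S"
    have "(0::real) < (1/2)^Suc k"
      by simp
    then show "z \<in> disc"
      using S_norm[OF \<open>z \<in> S\<close>] by (simp only: mem_ball_0)
  qed
  have deriv: "(g has_field_derivative deriv g z) (at z within S)" if "z \<in> S" for z
    using hol S_disc that
    by (meson DERIV_deriv_iff_field_differentiable has_field_derivative_at_within
        holomorphic_on_imp_differentiable_at open_ball subsetD)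
  have deriv_bound: "cmod (deriv g z) \<le> M * 2^Suc k" if "z \<in> S" for z
  proof -
    have "cmod z < 1"
      using S_disc that by auto
    then have "(cmod z)\<^sup>2 \<le> cmod z"
      by (simp add: power2_eq_square mult_left_le_one_le)
    then have "(1/2)^Suc k * cmod (deriv g z) \<le> (1 - (cmod z)\<^sup>2) * cmod (deriv g z)"
      using S_norm[OF that] by (intro mult_right_mono) auto
    also have "\<dots> \<le> M"
      using M S_disc that by auto
    finally show ?thesis
      by (simp add: field_simps power_divide)
  qed
  have "cmod (g (dyadic_point (Suc k) u) - g (dyadic_point k u))
      \<le> M * 2^Suc k * cmod (dyadic_point (Suc k) u - dyadic_point k u)"
    by (rule field_differentiable_bound[OF _ deriv deriv_bound]) (auto simp: S_def)
  then show ?thesis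
    by (simp add: norm_dyadic_point_diff[OF u] power_divide)
qed

lemma bloch_space_dyadic_growth:
  assumes "g \<in> bloch_space"
  obtains M where "M \<ge> 0"
    and "\<And>K u. cmod u = 1 \<Longrightarrow> cmod (g (dyadic_point K u) - g 0) \<le> M * real K"
proof -
  have hol: "g holomorphic_on disc"
    using assms unfolding bloch_space_def by blast
  obtain M where M: "\<And>z. z \<in> disc \<Longrightarrow> (1 - (cmod z)\<^sup>2) * cmod (deriv g z) \<le> M"
    using assms unfolding bloch_space_def by blast
  have "M \<ge> 0"
    using M[of 0] by simp (meson norm_ge_zero order.trans)
  have growth: "cmod (g (dyadic_point K u) - g 0) \<le> M * real K" if u: "cmod u = 1" for K u
  proof (induction K)
    case 0
    then show ?case
      by (simp add: dyadic_point_def)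
  next
    case (Suc K)
    have "cmod (g (dyadic_point (Suc K) u) - g 0)
        \<le> cmod (g (dyadic_point (Suc K) u) - g (dyadic_point K u)) + cmod (g (dyadic_point K u) - g 0)"
      by (rule norm_diff_triangle_le) auto
    also have "\<dots> \<le> M + M * real K"
      using bloch_dyadic_step_le[OF hol M u, of K] Suc by simp
    finally show ?case
      by (simp add: algebra_simps)
  qed
  show ?thesis
    by (rule that[OF \<open>M \<ge> 0\<close> growth])
qed

lemma not_in_bloch_space_if_fast_dyadic_growth:
  assumes "\<delta> > 0"
    and growth: "\<And>n. \<exists>K u. cmod u = 1 \<and> \<delta> * (real n * (real K + 1) - 1) \<le> cmod (g (dyadic_point K u))"
  shows "g \<notin> bloch_space"
proof
  assume "g \<in> bloch_space"
  then obtain M where "M \<ge> 0"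
    and M: "\<And>K u. cmod u = 1 \<Longrightarrow> cmod (g (dyadic_point K u) - g 0) \<le> M * real K"
    using bloch_space_dyadic_growth[OF \<open>g \<in> bloch_space\<close>] by blast
  obtain n where n: "(M + cmod (g 0) + \<delta> + 1) / \<delta> < real n"
    using reals_Archimedean2 by blast
  obtain K u where u: "cmod u = 1"
    and lower: "\<delta> * (real n * (real K + 1) - 1) \<le> cmod (g (dyadic_point K u))"
    using growth by blast
  have "cmod (g (dyadic_point K u)) \<le> cmod (g 0) + M * real K"
    using M[OF u, of K] norm_triangle_ineq2[of "g (dyadic_point K u)" "g 0"] by linarith
  moreover have "(M + cmod (g 0) + \<delta> + 1) * (real K + 1) \<le> (real n * \<delta>) * (real K + 1)"
    using n \<open>\<delta> > 0\<close> by (intro mult_right_mono) (auto simp: divide_less_eq)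
  moreover have "\<delta> * (real n * (real K + 1) - 1) = (real n * \<delta>) * (real K + 1) - \<delta>"
    by (simp add: algebra_simps)
  moreover have "(M + cmod (g 0) + \<delta> + 1) * (real K + 1)
      = M * real K + M + cmod (g 0) * real K + cmod (g 0) + (\<delta> + 1) * real K + \<delta> + 1"
    by (simp add: algebra_simps)
  moreover have "cmod (g 0) * real K \<ge> 0" "(\<delta> + 1) * real K \<ge> 0"
    using \<open>\<delta> > 0\<close> by auto
  ultimately show False
    using lower \<open>M \<ge> 0\<close> by linarith
qed

lemma bloch_space_cmult:
  assumes "g \<in> bloch_space"
  shows "(\<lambda>z. k * g z) \<in> bloch_space"
proof -
  have hol: "g holomorphic_on disc"
    using assms unfolding bloch_space_def by blast
  obtain M where M: "\<And>z. z \<in> disc \<Longrightarrow> (1 - (cmod z)\<^sup>2) * cmod (deriv g z) \<le> M"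
    using assms unfolding bloch_space_def by blast
  have "(1 - (cmod z)\<^sup>2) * cmod (deriv (\<lambda>z. k * g z) z) \<le> cmod k * M" if z: "z \<in> disc" for z
  proof -
    have "g field_differentiable at z"
      using hol z by (meson holomorphic_on_imp_differentiable_at open_ball)
    then have "deriv (\<lambda>z. k * g z) z = k * deriv g z"
      by (rule deriv_cmult)
    then show ?thesis
      using M[OF z] by (simp add: norm_mult mult.left_commute mult_left_mono)
  qed
  moreover have "(\<lambda>z. k * g z) holomorphic_on disc"
    by (intro holomorphic_intros hol)
  ultimately show ?thesis
    unfolding bloch_space_def by blast
qed

section \<open>Power kernels and their series\<close>

definition power_kernel :: "real \<Rightarrow> complex \<Rightarrow> complex \<Rightarrow> complex" where
  "power_kernel g u z = exp (- of_real g * Ln (1 - cnj u * z))"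

lemma Re_one_minus_cnj_mult_pos:
  "cmod u = 1 \<Longrightarrow> z \<in> disc \<Longrightarrow> Re (1 - cnj u * z) > 0"
  using complex_Re_le_cmod[of "cnj u * z"] by (simp add: norm_mult)

lemma norm_one_minus_cnj_mult_ge:
  "cmod u = 1 \<Longrightarrow> 1 - cmod z \<le> cmod (1 - cnj u * z)"
  using norm_triangle_ineq2[of 1 "cnj u * z"] by (simp add: norm_mult)

lemma power_kernel_holomorphic:
  assumes "cmod u = 1"
  shows "power_kernel g u holomorphic_on disc"
proof -
  have Ln: "(\<lambda>z. Ln (1 - cnj u * z)) holomorphic_on disc"
  proof (rule holomorphic_on_Ln')
    fix z
    assume "z \<in> disc"
    then show "1 - cnj u * z \<notin> \<real>\<^sub>\<le>\<^sub>0"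
      using Re_one_minus_cnj_mult_pos[OF assms] complex_nonpos_Reals_iff by (metis not_le)
  qed (intro holomorphic_intros)
  then show ?thesis
    unfolding power_kernel_def by (intro holomorphic_on_exp' holomorphic_on_mult holomorphic_on_const Ln)
qed

lemma norm_power_kernel:
  assumes "cmod u = 1" "z \<in> disc"
  shows "cmod (power_kernel g u z) = cmod (1 - cnj u * z) powr (-g)"
proof -
  have "1 - cnj u * z \<noteq> 0"
    using Re_one_minus_cnj_mult_pos[OF assms] by force
  then show ?thesis
    by (simp add: power_kernel_def norm_exp_eq_Re powr_def)
qed

lemma norm_power_kernel_le:
  assumes "cmod u = 1" "z \<in> disc" "0 \<le> g" "g \<le> \<gamma>"
  shows "cmod (power_kernel g u z) \<le> (1 - cmod z) powr (-\<gamma>)"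
proof -
  have pos: "0 < 1 - cmod z"
    using assms(2) by simp
  have "cmod (power_kernel g u z) \<le> (1 - cmod z) powr (-g)"
    unfolding norm_power_kernel[OF assms(1,2)]
    using assms(3) pos norm_one_minus_cnj_mult_ge[OF assms(1)] by (intro powr_mono2') auto
  also have "\<dots> \<le> (1 - cmod z) powr (-\<gamma>)"
    using pos assms(4) by (intro powr_mono') auto
  finally show ?thesis .
qed

lemma half_power_powr: "((1/2::real)^K) powr (-g) = 2 powr (real K * g)"
  by (simp add: powr_def ln_realpow ln_div)

lemma power_kernel_dyadic_point:
  assumes "cmod u = 1"
  shows "power_kernel g u (dyadic_point K u) = of_real (2 powr (real K * g))"
proof -
  have "cnj u * u = 1"
    using complex_norm_square[of u] assms by (simp add: mult.commute)
  then have "cnj u * dyadic_point K u = of_real (1 - (1/2)^K)"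
    unfolding dyadic_point_def by (metis mult.left_commute mult.right_neutral)
  then have "1 - cnj u * dyadic_point K u = of_real ((1/2)^K)"
    by simp
  then have "power_kernel g u (dyadic_point K u) = exp (of_real (- g * ln ((1/2)^K)))"
    using Ln_of_real[of "(1/2::real)^K"] by (simp add: power_kernel_def)
  also have "\<dots> = of_real (exp (- g * ln ((1/2)^K)))"
    by (rule exp_of_real)
  also have "exp (- g * ln ((1/2::real)^K)) = 2 powr (real K * g)"
    by (simp add: powr_def ln_realpow ln_div)
  finally show ?thesis .
qed

lemma kernel_series_tail_bound:
  fixes c u :: "nat \<Rightarrow> complex" and g :: "nat \<Rightarrow> real"
  assumes c: "\<And>j. m \<le> j \<Longrightarrow> cmod (c j) \<le> (1/2)^j * \<tau>" and u: "\<And>j. cmod (u j) = 1"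
    and g: "\<And>j. 0 \<le> g j" "\<And>j. g j \<le> \<gamma>" and z: "z \<in> disc"
  shows "summable (\<lambda>j. c j * power_kernel (g j) (u j) z)"
    and "cmod ((\<Sum>j. c j * power_kernel (g j) (u j) z) - (\<Sum>j<m. c j * power_kernel (g j) (u j) z))
           \<le> 2 * (1/2)^m * \<tau> * (1 - cmod z) powr (-\<gamma>)"
proof -
  define t where "t j = c (j + m) * power_kernel (g (j + m)) (u (j + m)) z" for j
  define X where "X = (1/2)^m * \<tau> * (1 - cmod z) powr (-\<gamma>)"
  have "0 \<le> (1/2::real)^m * \<tau>"
    using c[of m] norm_ge_zero order_trans by blast
  moreover have "(0::real) < (1/2)^m"
    by simp
  ultimately have "\<tau> \<ge> 0"
    by (auto simp: zero_le_mult_iff)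
  have term_bound: "cmod (t j) \<le> (1/2)^j * X" for j
  proof -
    have "cmod (t j) \<le> ((1/2)^(j + m) * \<tau>) * (1 - cmod z) powr (-\<gamma>)"
      unfolding t_def norm_mult using c[of "j + m"] norm_power_kernel_le[OF u z g] \<open>\<tau> \<ge> 0\<close>
      by (intro mult_mono) auto
    then show ?thesis
      by (simp add: X_def power_add)
  qed
  have geometric: "summable (\<lambda>j. (1/2::real)^j * X)"
    by (intro summable_mult2 summable_geometric) auto
  have summable_norm_t: "summable (\<lambda>j. cmod (t j))"
    by (rule summable_comparison_test'[OF geometric]) (use term_bound in auto)
  then show summable: "summable (\<lambda>j. c j * power_kernel (g j) (u j) z)"
    using summable_norm_cancel summable_iff_shift[of _ m] unfolding t_def by blast
  have "cmod (\<Sum>j. t j) \<le> (\<Sum>j. cmod (t j))"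
    by (rule summable_norm[OF summable_norm_t])
  also have "\<dots> \<le> (\<Sum>j. (1/2)^j * X)"
    by (rule suminf_le[OF _ summable_norm_t geometric]) (use term_bound in auto)
  also have "\<dots> = 2 * X"
    by (subst suminf_mult2[symmetric, OF summable_geometric]) (auto simp: suminf_geometric)
  finally show "cmod ((\<Sum>j. c j * power_kernel (g j) (u j) z) - (\<Sum>j<m. c j * power_kernel (g j) (u j) z))
      \<le> 2 * (1/2)^m * \<tau> * (1 - cmod z) powr (-\<gamma>)"
    by (simp add: t_def X_def mult.assoc suminf_minus_initial_segment[OF summable])
qed

lemma kernel_series_holomorphic:
  fixes c u :: "nat \<Rightarrow> complex" and g :: "nat \<Rightarrow> real"
  assumes c: "\<And>j. cmod (c j) \<le> (1/2)^j" and u: "\<And>j. cmod (u j) = 1"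
    and g: "\<And>j. 0 \<le> g j" "\<And>j. g j \<le> \<gamma>"
  shows "(\<lambda>z. \<Sum>j. c j * power_kernel (g j) (u j) z) holomorphic_on disc"
proof (rule holomorphic_uniform_sequence[where f = "\<lambda>n z. \<Sum>j<n. c j * power_kernel (g j) (u j) z"])
  show "(\<lambda>z. \<Sum>j<n. c j * power_kernel (g j) (u j) z) holomorphic_on disc" for n
    by (intro holomorphic_intros power_kernel_holomorphic u)
  fix x :: complex
  assume "x \<in> disc"
  define d where "d = (1 - cmod x) / 2"
  have "d > 0"
    using \<open>x \<in> disc\<close> by (simp add: d_def)
  have near: "d \<le> 1 - cmod z" if "z \<in> cball x d" for z
    using that norm_triangle_ineq2[of z x] by (simp add: dist_norm norm_minus_commute d_def)
  have "cball x d \<subseteq> disc"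
    using near \<open>d > 0\<close> by fastforce
  have "uniform_limit (cball x d) (\<lambda>n z. \<Sum>j<n. c j * power_kernel (g j) (u j) z)
      (\<lambda>z. \<Sum>j. c j * power_kernel (g j) (u j) z) sequentially"
  proof (rule Weierstrass_m_test)
    show "summable (\<lambda>j. (1/2::real)^j * d powr (-\<gamma>))"
      by (intro summable_mult2 summable_geometric) auto
    fix n z
    assume "z \<in> cball x d"
    then have "z \<in> disc"
      using \<open>cball x d \<subseteq> disc\<close> by auto
    have "cmod (power_kernel (g n) (u n) z) \<le> (1 - cmod z) powr (-\<gamma>)"
      by (rule norm_power_kernel_le[OF u \<open>z \<in> disc\<close> g])
    also have "\<dots> \<le> d powr (-\<gamma>)"
      using near[OF \<open>z \<in> cball x d\<close>] \<open>d > 0\<close> g(1)[of 0] g(2)[of 0] by (intro powr_mono2') auto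
    finally show "cmod (c n * power_kernel (g n) (u n) z) \<le> (1/2)^n * d powr (-\<gamma>)"
      unfolding norm_mult using c[of n] by (intro mult_mono) auto
  qed
  then show "\<exists>d>0. cball x d \<subseteq> disc \<and> uniform_limit (cball x d)
      (\<lambda>n z. \<Sum>j<n. c j * power_kernel (g j) (u j) z) (\<lambda>z. \<Sum>j. c j * power_kernel (g j) (u j) z) sequentially"
    using \<open>d > 0\<close> \<open>cball x d \<subseteq> disc\<close> by blast
qed simp

lemma kernel_series_in_bergman_space:
  fixes c u :: "nat \<Rightarrow> complex" and g :: "nat \<Rightarrow> real"
  assumes p: "0 < p" and \<alpha>: "\<alpha> > -1" and c: "\<And>j. cmod (c j) \<le> (1/2)^j" and u: "\<And>j. cmod (u j) = 1"
    and g: "\<And>j. 0 \<le> g j" "\<And>j. g j \<le> (1 + min \<alpha> 0) / (2 * p)"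
  shows "(\<lambda>z. \<Sum>j. c j * power_kernel (g j) (u j) z) \<in> bergman_space p \<alpha>"
proof (rule bergman_spaceI_growth[OF p \<alpha>])
  show "(\<lambda>z. \<Sum>j. c j * power_kernel (g j) (u j) z) holomorphic_on disc"
    by (rule kernel_series_holomorphic[OF c u g])
  show "cmod (\<Sum>j. c j * power_kernel (g j) (u j) z) \<le> 2 * (1 - cmod z) powr (- ((1 + min \<alpha> 0) / (2 * p)))"
    if "z \<in> disc" for z
    using kernel_series_tail_bound(2)[of 0 c 1, OF _ u g that] c by simp
qed (use p \<alpha> in auto)

section \<open>Construction of the test function\<close>

lemma holomorphic_max_modulus_on_circle:
  assumes hol: "w holomorphic_on disc" and "cmod z < r" "r < 1"
  obtains u where "cmod u = 1" "cmod (w z) \<le> cmod (w (of_real r * u))"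
proof -
  have "r > 0"
    using assms(2) norm_ge_zero[of z] by linarith
  have "continuous_on (sphere 0 r) (\<lambda>z. cmod (w z))"
    using hol \<open>r < 1\<close> by (intro continuous_intros holomorphic_on_imp_continuous_on[THEN continuous_on_subset]) auto
  then obtain a where a: "a \<in> sphere 0 r" and a_max: "\<And>y. y \<in> sphere 0 r \<Longrightarrow> cmod (w y) \<le> cmod (w a)"
    using continuous_attains_sup[OF compact_sphere] \<open>r > 0\<close> by (metis less_le_not_le sphere_eq_empty)
  have "cmod (w z) \<le> cmod (w a)"
  proof (rule maximum_modulus_frontier[of w "ball 0 r"])
    show "w holomorphic_on interior (ball 0 r)"
      using hol \<open>r < 1\<close> by (auto intro: holomorphic_on_subset)
    show "continuous_on (closure (ball 0 r)) w"
      using hol \<open>r < 1\<close> \<open>r > 0\<close> by (auto intro: holomorphic_on_imp_continuous_on[THEN continuous_on_subset])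
  qed (use \<open>r > 0\<close> assms(2) a_max in auto)
  moreover have "a = of_real r * (a / of_real r)" "cmod (a / of_real r) = 1"
    using a \<open>r > 0\<close> by (auto simp: norm_divide)
  ultimately show ?thesis
    using that by metis
qed

text \<open>Cauchy's estimate for \<open>\<phi>'(z\<^sub>0) \<noteq> 0\<close> on the circle \<open>|\<zeta> - z\<^sub>0| = R\<close>.\<close>
lemma nonconstant_entire_large_values:
  fixes \<phi> :: "complex \<Rightarrow> complex"
  assumes hol: "\<phi> holomorphic_on UNIV" and nc: "\<not> (\<exists>c. \<forall>z. \<phi> z = c)"
  obtains c \<rho> where "c > 0" "\<rho> \<ge> 0" "\<And>R. R > 0 \<Longrightarrow> \<exists>\<zeta>. cmod \<zeta> \<le> R + \<rho> \<and> c * R \<le> cmod (\<phi> \<zeta>)"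
proof -
  obtain z0 where z0: "deriv \<phi> z0 \<noteq> 0"
  proof (rule ccontr)
    assume "\<not> thesis"
    with that have "\<And>z. deriv \<phi> z = 0"
      by blast
    then have "\<exists>c. \<forall>x\<in>UNIV. \<phi> x = c"
      using holomorphic_derivI[OF hol open_UNIV]
      by (intro has_field_derivative_zero_constant) auto
    with nc show False
      by auto
  qed
  define c where "c = cmod (deriv \<phi> z0) / 2"
  have "c > 0"
    using z0 by (simp add: c_def)
  have "\<exists>\<zeta>. cmod \<zeta> \<le> R + cmod z0 \<and> c * R \<le> cmod (\<phi> \<zeta>)" if "R > 0" for R
  proof (rule ccontr)
    assume "\<not> ?thesis"
    then have small: "cmod (\<phi> \<zeta>) \<le> c * R" if "cmod \<zeta> \<le> R + cmod z0" for \<zeta>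
      using that by force
    have "norm ((deriv ^^ 1) \<phi> z0) \<le> fact 1 * (c * R) / R^1"
    proof (rule Cauchy_inequality)
      show "\<phi> holomorphic_on ball z0 R"
        using hol by (rule holomorphic_on_subset) auto
      show "continuous_on (cball z0 R) \<phi>"
        using hol holomorphic_on_imp_continuous_on continuous_on_subset by blast
      show "cmod (\<phi> x) \<le> c * R" if "norm (z0 - x) = R" for x
        using that small norm_triangle_ineq2[of x z0] norm_minus_commute[of z0 x] by force
    qed (use \<open>R > 0\<close> in auto)
    then show False
      using \<open>R > 0\<close> \<open>c > 0\<close> by (simp add: c_def)
  qed
  then show ?thesis
    using that[of c "cmod z0"] \<open>c > 0\<close> by auto
qed

lemma linear_le_exponential_eventually:
  fixes A b D E :: real
  assumes "A > 0" "b > 0"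
  shows "eventually (\<lambda>K. D + E * (real K + 1) \<le> A * 2 powr (real K * b)) sequentially"
proof -
  define \<beta> where "\<beta> = b * ln 2"
  have "\<beta> > 0"
    using assms by (simp add: \<beta>_def)
  define T where "T = 4 * (\<bar>D\<bar> + 2 * \<bar>E\<bar>) / (A * \<beta>\<^sup>2)"
  have "D + E * (real K + 1) \<le> A * 2 powr (real K * b)" if K: "K \<ge> nat \<lceil>T\<rceil> + 1" for K
  proof -
    have "real K \<ge> 1" "real K \<ge> T"
      using K by linarith+
    define x where "x = real K * \<beta>"
    have "x \<ge> 0"
      using \<open>\<beta> > 0\<close> by (simp add: x_def)
    have "x/2 \<le> exp (x/2)"
      using exp_ge_add_one_self[of "x/2"] by linarith
    then have "(x/2)\<^sup>2 \<le> exp (x/2) ^ 2"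
      using \<open>x \<ge> 0\<close> by (intro power_mono) auto
    also have "\<dots> = 2 powr (real K * b)"
      by (simp add: powr_def x_def \<beta>_def power2_eq_square flip: exp_add)
    finally have "A * (x/2)\<^sup>2 \<le> A * 2 powr (real K * b)"
      using \<open>A > 0\<close> by simp
    moreover have "(\<bar>D\<bar> + 2 * \<bar>E\<bar>) * real K \<le> A * (x/2)\<^sup>2"
    proof -
      have "(\<bar>D\<bar> + 2 * \<bar>E\<bar>) * real K = (A * \<beta>\<^sup>2 / 4) * T * real K"
        using \<open>A > 0\<close> \<open>\<beta> > 0\<close> by (simp add: T_def)
      also have "\<dots> \<le> (A * \<beta>\<^sup>2 / 4) * real K * real K"
        using \<open>real K \<ge> T\<close> \<open>A > 0\<close> by (intro mult_right_mono mult_left_mono) auto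
      also have "\<dots> = A * (x/2)\<^sup>2"
        by (simp add: x_def power2_eq_square)
      finally show ?thesis .
    qed
    moreover have "D + E * (real K + 1) \<le> (\<bar>D\<bar> + 2 * \<bar>E\<bar>) * real K"
    proof -
      have "\<bar>D\<bar> \<le> \<bar>D\<bar> * real K" "\<bar>E\<bar> \<le> \<bar>E\<bar> * real K" "E * real K \<le> \<bar>E\<bar> * real K"
        using \<open>real K \<ge> 1\<close> by (auto intro: mult_right_mono simp: mult_le_cancel_left1)
      then show ?thesis
        by (simp add: algebra_simps)
    qed
    ultimately show ?thesis
      by linarith
  qed
  then show ?thesis
    unfolding eventually_sequentially by blast
qed

lemma eventually_dyadic_point_with_large_modulus:
  assumes "w holomorphic_on disc" "z \<in> disc"
  shows "eventually (\<lambda>K. \<exists>u. cmod u = 1 \<and> cmod (w z) \<le> cmod (w (dyadic_point K u))) sequentially"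
proof -
  have "eventually (\<lambda>K. (1/2::real)^K < 1 - cmod z) sequentially"
    using assms(2) by (intro order_tendstoD(2)[OF LIMSEQ_power_zero]) auto
  then show ?thesis
  proof eventually_elim
    case (elim K)
    then have "cmod z < 1 - (1/2)^K" "1 - (1/2::real)^K < 1"
      by auto
    then show ?case
      unfolding dyadic_point_def by (meson holomorphic_max_modulus_on_circle[OF assms(1)])
  qed
qed

lemma exists_kernel_coefficient_hitting:
  assumes "cmod u = 1" "cmod s \<le> A * 2 powr (real K * g)" "cmod \<zeta> \<le> A * 2 powr (real K * g)"
  obtains a where "cmod a \<le> 2 * A" "s + a * power_kernel g u (dyadic_point K u) = \<zeta>"
proof -
  define P where "P = 2 powr (real K * g)"
  have "P > 0"
    by (simp add: P_def)
  have "cmod (\<zeta> - s) \<le> 2 * A * P"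
    using norm_triangle_ineq4[of \<zeta> s] assms(2,3) by (simp add: P_def)
  then have "cmod ((\<zeta> - s) / of_real P) \<le> 2 * A"
    using \<open>P > 0\<close> by (simp add: norm_divide field_simps)
  moreover have "s + (\<zeta> - s) / of_real P * power_kernel g u (dyadic_point K u) = \<zeta>"
    using \<open>P > 0\<close> by (simp add: P_def power_kernel_dyadic_point[OF assms(1)])
  ultimately show ?thesis
    using that by blast
qed

lemma norm_add_kernel_term_le:
  assumes u: "cmod u = 1" and z: "z \<in> disc"
    and S: "\<And>z. z \<in> disc \<Longrightarrow> cmod (S z) \<le> B * (1 - cmod z) powr (- g0)"
    and g: "0 \<le> g0" "g0 \<le> g1" and "B \<ge> 0"
  shows "cmod (S z + a * power_kernel g1 u z) \<le> (B + cmod a) * (1 - cmod z) powr (- g1)"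
proof -
  have "cmod (S z + a * power_kernel g1 u z) \<le> cmod (S z) + cmod a * cmod (power_kernel g1 u z)"
    by (metis norm_mult norm_triangle_ineq)
  also have "\<dots> \<le> B * (1 - cmod z) powr (- g0) + cmod a * (1 - cmod z) powr (- g1)"
    using S[OF z] norm_power_kernel_le[OF u z _ order_refl] g by (intro add_mono mult_left_mono) auto
  also have "B * (1 - cmod z) powr (- g0) \<le> B * (1 - cmod z) powr (- g1)"
    using \<open>B \<ge> 0\<close> z g by (intro mult_left_mono powr_mono') auto
  finally show ?thesis
    by (simp add: algebra_simps)
qed

text \<open>The new term moves the value at \<open>a = (1 - 2^-K) u\<close> to a point \<open>\<zeta>\<close> where \<open>|\<phi>|\<close> is
  large. Its coefficient can be taken small because \<open>|S(a)| = O(2^(K g0))\<close> and \<open>|\<zeta>| = O(K)\<close>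
  while the kernel equals \<open>2^(K g1)\<close> at \<open>a\<close>, with \<open>g0 < g1\<close>.\<close>
lemma exists_kernel_term_with_large_image:
  fixes \<phi> w S :: "complex \<Rightarrow> complex" and B g0 g1 \<eta> N :: real
  assumes phol: "\<phi> holomorphic_on UNIV" and nc: "\<not> (\<exists>c. \<forall>z. \<phi> z = c)"
    and whol: "w holomorphic_on disc" and z1: "z1 \<in> disc"
    and g: "0 \<le> g0" "g0 < g1" and "\<eta> > 0"
    and S: "\<And>z. z \<in> disc \<Longrightarrow> cmod (S z) \<le> B * (1 - cmod z) powr (- g0)"
  obtains u a K where "cmod u = 1" "cmod a \<le> \<eta>" "cmod (w z1) \<le> cmod (w (dyadic_point K u))"
    "N * (real K + 1) \<le> cmod (\<phi> (S (dyadic_point K u) + a * power_kernel g1 u (dyadic_point K u)))"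
proof -
  obtain c \<rho> where "c > 0" "\<rho> \<ge> 0"
    and growth: "\<And>R. R > 0 \<Longrightarrow> \<exists>\<zeta>. cmod \<zeta> \<le> R + \<rho> \<and> c * R \<le> cmod (\<phi> \<zeta>)"
    using nonconstant_entire_large_values[OF phol nc] by blast
  define b A where "b = g1 - g0" and "A = \<eta> / 2"
  have "b > 0" "A > 0"
    using g \<open>\<eta> > 0\<close> by (auto simp: b_def A_def)
  have "eventually (\<lambda>K. B \<le> A * 2 powr (real K * b)) sequentially"
    using linear_le_exponential_eventually[OF \<open>A > 0\<close> \<open>b > 0\<close>, of B 0] by simp
  moreover have "eventually (\<lambda>K. c * \<rho> + 1 + \<bar>N\<bar> * (real K + 1) \<le> c * A * 2 powr (real K * b)) sequentially"
    using \<open>c > 0\<close> \<open>A > 0\<close> by (intro linear_le_exponential_eventually \<open>b > 0\<close>) simp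
  ultimately have "eventually (\<lambda>K. B \<le> A * 2 powr (real K * b) \<and>
      c * \<rho> + 1 + \<bar>N\<bar> * (real K + 1) \<le> c * A * 2 powr (real K * b) \<and>
      (\<exists>u. cmod u = 1 \<and> cmod (w z1) \<le> cmod (w (dyadic_point K u)))) sequentially"
    using eventually_dyadic_point_with_large_modulus[OF whol z1] by (intro eventually_conj)
  then obtain K u where K: "B \<le> A * 2 powr (real K * b)"
    "c * \<rho> + 1 + \<bar>N\<bar> * (real K + 1) \<le> c * A * 2 powr (real K * b)"
    and u: "cmod u = 1" "cmod (w z1) \<le> cmod (w (dyadic_point K u))"
    unfolding eventually_sequentially by auto
  define P where "P = 2 powr (real K * g1)"
  have P_split: "P = 2 powr (real K * g0) * 2 powr (real K * b)"
    by (simp add: P_def b_def powr_add[symmetric] algebra_simps)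
  have "1 \<le> 2 powr (real K * g0)"
    using g by (simp add: ge_one_powr_ge_zero)
  then have "2 powr (real K * b) \<le> P"
    unfolding P_split by (simp add: mult_right_mono)
  have "cmod (S (dyadic_point K u)) \<le> B * 2 powr (real K * g0)"
    using S[OF dyadic_point_in_disc[OF u(1)]] by (simp add: norm_dyadic_point[OF u(1)] half_power_powr)
  also have "\<dots> \<le> A * 2 powr (real K * b) * 2 powr (real K * g0)"
    using K(1) by (intro mult_right_mono) auto
  finally have S_bound: "cmod (S (dyadic_point K u)) \<le> A * P"
    by (simp add: P_split ac_simps)
  have "c * A * 2 powr (real K * b) \<le> c * A * P"
    using \<open>2 powr (real K * b) \<le> P\<close> \<open>c > 0\<close> \<open>A > 0\<close> by (intro mult_left_mono) auto
  then have CP: "c * \<rho> + 1 + \<bar>N\<bar> * (real K + 1) \<le> c * (A * P)"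
    using K(2) by (simp add: mult.assoc)
  moreover have "0 \<le> \<bar>N\<bar> * (real K + 1)"
    by simp
  ultimately have "c * \<rho> < c * (A * P)"
    by linarith
  then have "A * P - \<rho> > 0"
    using \<open>c > 0\<close> mult_less_cancel_left_pos by auto
  then obtain \<zeta> where \<zeta>: "cmod \<zeta> \<le> (A * P - \<rho>) + \<rho>" "c * (A * P - \<rho>) \<le> cmod (\<phi> \<zeta>)"
    using growth by blast
  have "N * (real K + 1) \<le> \<bar>N\<bar> * (real K + 1)"
    by (intro mult_right_mono) auto
  moreover have "c * (A * P - \<rho>) = c * (A * P) - c * \<rho>"
    by (simp add: right_diff_distrib)
  ultimately have "N * (real K + 1) \<le> cmod (\<phi> \<zeta>)"
    using \<zeta>(2) CP by linarith
  moreover obtain a where "cmod a \<le> 2 * A"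
    "S (dyadic_point K u) + a * power_kernel g1 u (dyadic_point K u) = \<zeta>"
    using exists_kernel_coefficient_hitting[OF u(1) S_bound[unfolded P_def]] \<zeta>(1) by (auto simp: P_def)
  ultimately show ?thesis
    using that[OF u(1) _ u(2)] by (auto simp: A_def)
qed

text \<open>By continuity of \<open>\<phi>\<close>, the later terms of the series, which add at most \<open>\<tau>' 2^(K\<gamma>)\<close>
  at \<open>a\<close>, cannot destroy the lower bound.\<close>
lemma exists_kernel_term_with_stable_large_image:
  fixes \<phi> w S :: "complex \<Rightarrow> complex" and B g0 g1 \<eta> \<tau> \<gamma> N :: real
  assumes phol: "\<phi> holomorphic_on UNIV" and nc: "\<not> (\<exists>c. \<forall>z. \<phi> z = c)"
    and whol: "w holomorphic_on disc" and z1: "z1 \<in> disc"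
    and g: "0 \<le> g0" "g0 < g1" and "\<eta> > 0" and "\<tau> > 0"
    and S: "\<And>z. z \<in> disc \<Longrightarrow> cmod (S z) \<le> B * (1 - cmod z) powr (- g0)"
  obtains u a K \<tau>' where "cmod u = 1" "cmod a \<le> \<eta>" "0 < \<tau>'" "\<tau>' \<le> \<tau>"
    "cmod (w z1) \<le> cmod (w (dyadic_point K u))"
    "\<And>e. cmod e \<le> \<tau>' * 2 powr (real K * \<gamma>) \<Longrightarrow>
       N * (real K + 1) - 1 \<le> cmod (\<phi> (S (dyadic_point K u) + a * power_kernel g1 u (dyadic_point K u) + e))"
proof -
  obtain u a K where u: "cmod u = 1" "cmod a \<le> \<eta>" "cmod (w z1) \<le> cmod (w (dyadic_point K u))"
    and large: "N * (real K + 1) \<le> cmod (\<phi> (S (dyadic_point K u) + a * power_kernel g1 u (dyadic_point K u)))"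
    using exists_kernel_term_with_large_image[OF phol nc whol z1 g \<open>\<eta> > 0\<close> S] by blast
  define \<zeta> where "\<zeta> = S (dyadic_point K u) + a * power_kernel g1 u (dyadic_point K u)"
  have "isCont \<phi> \<zeta>"
    using holomorphic_on_imp_continuous_on[OF phol] continuous_on_eq_continuous_at[OF open_UNIV] by blast
  then obtain \<epsilon> where "\<epsilon> > 0" and \<epsilon>: "\<And>x. dist x \<zeta> < \<epsilon> \<Longrightarrow> dist (\<phi> x) (\<phi> \<zeta>) < 1"
    unfolding continuous_at_eps_delta by (meson zero_less_one)
  define \<tau>' where "\<tau>' = min \<tau> (\<epsilon> / 2 / 2 powr (real K * \<gamma>))"
  have "0 < \<tau>'" "\<tau>' \<le> \<tau>"
    using \<open>\<tau> > 0\<close> \<open>\<epsilon> > 0\<close> by (auto simp: \<tau>'_def)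
  have "N * (real K + 1) - 1 \<le> cmod (\<phi> (\<zeta> + e))" if e: "cmod e \<le> \<tau>' * 2 powr (real K * \<gamma>)" for e
  proof -
    have "\<tau>' * 2 powr (real K * \<gamma>) \<le> (\<epsilon> / 2 / 2 powr (real K * \<gamma>)) * 2 powr (real K * \<gamma>)"
      unfolding \<tau>'_def by (intro mult_right_mono) auto
    then have "\<tau>' * 2 powr (real K * \<gamma>) \<le> \<epsilon> / 2"
      by simp
    then have "dist (\<zeta> + e) \<zeta> < \<epsilon>"
      using e \<open>\<epsilon> > 0\<close> by (simp add: dist_norm)
    then have "cmod (\<phi> (\<zeta> + e) - \<phi> \<zeta>) < 1"
      using \<epsilon> by (simp add: dist_norm)
    then show ?thesis
      using large[folded \<zeta>_def] norm_triangle_ineq2[of "\<phi> \<zeta>" "\<phi> (\<zeta> + e)"]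
        norm_minus_commute[of "\<phi> (\<zeta> + e)" "\<phi> \<zeta>"] by linarith
  qed
  then show ?thesis
    using that[OF u(1,2) \<open>0 < \<tau>'\<close> \<open>\<tau>' \<le> \<tau>\<close> u(3)] unfolding \<zeta>_def by blast
qed

text \<open>The recursive construction, by dependent choice on states \<open>(S, \<tau>, B, c, u)\<close>: \<open>S\<close> is the
  current partial sum, bounded by \<open>B (1 - |z|)^-(g n)\<close>, \<open>\<tau>\<close> controls the size of all later
  coefficients, and \<open>c, u\<close> are the coefficient and direction of the last kernel added.\<close>
lemma kernel_sequence_exists:
  fixes \<phi> w :: "complex \<Rightarrow> complex" and g :: "nat \<Rightarrow> real" and \<gamma> :: real
  assumes phol: "\<phi> holomorphic_on UNIV" and nc: "\<not> (\<exists>c. \<forall>z. \<phi> z = c)"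
    and whol: "w holomorphic_on disc" and z1: "z1 \<in> disc"
    and g: "\<And>n. 0 \<le> g n" "\<And>n. g n < g (Suc n)"
  obtains c u \<tau> where "c 0 = 0" "\<And>n. cmod (u n) = 1" "\<And>n. 0 < \<tau> n" "\<And>n. \<tau> n \<le> 1"
    "\<And>n. \<tau> (Suc n) \<le> \<tau> n" "\<And>n. cmod (c (Suc n)) \<le> (1/2)^Suc n * \<tau> n"
    "\<And>n. \<exists>K. cmod (w z1) \<le> cmod (w (dyadic_point K (u (Suc n)))) \<and>
       (\<forall>e. cmod e \<le> \<tau> (Suc n) * 2 powr (real K * \<gamma>) \<longrightarrow>
          real n * (real K + 1) - 1 \<le>
            cmod (\<phi> ((\<Sum>j<Suc (Suc n). c j * power_kernel (g j) (u j) (dyadic_point K (u (Suc n)))) + e)))"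
proof -
  define P where "P n x \<longleftrightarrow> (case x of (S, \<tau>, B, c, u) \<Rightarrow>
      (\<forall>z\<in>disc. cmod (S z) \<le> B * (1 - cmod z) powr (- g n)) \<and> B \<ge> 0 \<and> 0 < \<tau> \<and> \<tau> \<le> 1 \<and>
      cmod u = 1 \<and> (n = 0 \<longrightarrow> S = (\<lambda>z. 0) \<and> c = 0))"
    for n and x :: "(complex \<Rightarrow> complex) \<times> real \<times> real \<times> complex \<times> complex"
  define Q where "Q n x y \<longleftrightarrow> (case x of (S, \<tau>, _, _, _) \<Rightarrow> case y of (S', \<tau>', _, c', u') \<Rightarrow>
      S' = (\<lambda>z. S z + c' * power_kernel (g (Suc n)) u' z) \<and> cmod c' \<le> (1/2)^Suc n * \<tau> \<and> \<tau>' \<le> \<tau> \<and>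
      (\<exists>K. cmod (w z1) \<le> cmod (w (dyadic_point K u')) \<and>
         (\<forall>e. cmod e \<le> \<tau>' * 2 powr (real K * \<gamma>) \<longrightarrow>
            real n * (real K + 1) - 1 \<le> cmod (\<phi> (S' (dyadic_point K u') + e)))))"
    for n and x y :: "(complex \<Rightarrow> complex) \<times> real \<times> real \<times> complex \<times> complex"
  have "P 0 (\<lambda>z. 0, 1, 0, 0, 1)"
    by (simp add: P_def)
  moreover have "\<exists>y. P (Suc n) y \<and> Q n x y" if "P n x" for n x
  proof -
    obtain S \<tau> B c u where x: "x = (S, \<tau>, B, c, u)"
      by (cases x) auto
    have S: "\<And>z. z \<in> disc \<Longrightarrow> cmod (S z) \<le> B * (1 - cmod z) powr (- g n)"
      and "B \<ge> 0" "0 < \<tau>" "\<tau> \<le> 1"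
      using \<open>P n x\<close> unfolding x P_def by auto
    obtain u' c' K \<tau>' where u': "cmod u' = 1" "cmod c' \<le> (1/2)^Suc n * \<tau>" "0 < \<tau>'" "\<tau>' \<le> \<tau>"
      "cmod (w z1) \<le> cmod (w (dyadic_point K u'))"
      and large: "\<And>e. cmod e \<le> \<tau>' * 2 powr (real K * \<gamma>) \<Longrightarrow> real n * (real K + 1) - 1 \<le>
          cmod (\<phi> (S (dyadic_point K u') + c' * power_kernel (g (Suc n)) u' (dyadic_point K u') + e))"
      using exists_kernel_term_with_stable_large_image[OF phol nc whol z1 g(1) g(2) _ \<open>0 < \<tau>\<close> S]
        \<open>0 < \<tau>\<close> by (metis mult_pos_pos zero_less_divide_1_iff zero_less_numeral zero_less_power)
    define S' where "S' = (\<lambda>z. S z + c' * power_kernel (g (Suc n)) u' z)"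
    have "cmod (S' z) \<le> (B + cmod c') * (1 - cmod z) powr (- g (Suc n))" if "z \<in> disc" for z
      unfolding S'_def
      using g[of n] by (intro norm_add_kernel_term_le[OF u'(1) that S] \<open>B \<ge> 0\<close>) auto
    then have "P (Suc n) (S', \<tau>', B + cmod c', c', u')"
      using \<open>B \<ge> 0\<close> u' \<open>\<tau> \<le> 1\<close> unfolding P_def by auto
    moreover have "Q n x (S', \<tau>', B + cmod c', c', u')"
      unfolding Q_def x using u' large by (auto simp: S'_def)
    ultimately show ?thesis
      by blast
  qed
  ultimately obtain X where PX: "\<And>n. P n (X n)" and QX: "\<And>n. Q n (X n) (X (Suc n))"
    using dependent_nat_choice[of P Q] by blast
  obtain S \<tau> B c u where X: "\<And>n. X n = (S n, \<tau> n, B n, c n, u n)"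
    using that[of "\<lambda>n. fst (X n)" "\<lambda>n. fst (snd (X n))" "\<lambda>n. fst (snd (snd (X n)))"
        "\<lambda>n. fst (snd (snd (snd (X n))))" "\<lambda>n. snd (snd (snd (snd (X n))))"]
    by simp
  have P': "\<And>n. P n (S n, \<tau> n, B n, c n, u n)" and Q': "\<And>n. Q n (S n, \<tau> n, B n, c n, u n)
      (S (Suc n), \<tau> (Suc n), B (Suc n), c (Suc n), u (Suc n))"
    using PX QX by (simp_all only: X)
  have partial_sum: "S n = (\<lambda>z. \<Sum>j<Suc n. c j * power_kernel (g j) (u j) z)" for n
  proof (induction n)
    case 0
    then show ?case
      using P'[of 0] by (simp add: P_def)
  next
    case (Suc n)
    then show ?case
      using Q'[of n] by (simp add: Q_def)
  qed
  show ?thesis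
  proof (rule that)
    show "c 0 = 0" "cmod (u n) = 1" "0 < \<tau> n" "\<tau> n \<le> 1" for n
      using P'[of n] P'[of 0] by (auto simp: P_def)
    show "\<tau> (Suc n) \<le> \<tau> n" "cmod (c (Suc n)) \<le> (1/2)^Suc n * \<tau> n" for n
      using Q'[of n] by (auto simp: Q_def)
    show "\<exists>K. cmod (w z1) \<le> cmod (w (dyadic_point K (u (Suc n)))) \<and>
       (\<forall>e. cmod e \<le> \<tau> (Suc n) * 2 powr (real K * \<gamma>) \<longrightarrow>
          real n * (real K + 1) - 1 \<le>
            cmod (\<phi> ((\<Sum>j<Suc (Suc n). c j * power_kernel (g j) (u j) (dyadic_point K (u (Suc n)))) + e)))" for n
      using Q'[of n] partial_sum[of "Suc n"] by (simp add: Q_def)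
  qed
qed

lemma coefficient_tail_bound:
  fixes c :: "nat \<Rightarrow> complex" and \<tau> :: "nat \<Rightarrow> real"
  assumes \<tau>: "\<And>n. \<tau> (Suc n) \<le> \<tau> n" and c: "\<And>n. cmod (c (Suc n)) \<le> (1/2)^Suc n * \<tau> n"
    and "m < j"
  shows "cmod (c j) \<le> (1/2)^j * \<tau> m"
proof -
  obtain k where "j = Suc k" "m \<le> k"
    using \<open>m < j\<close> by (cases j) auto
  then have "cmod (c j) \<le> (1/2)^j * \<tau> k"
    using c[of k] by simp
  also have "\<dots> \<le> (1/2)^j * \<tau> m"
    using decseqD[OF decseq_SucI[of \<tau>, OF \<tau>] \<open>m \<le> k\<close>] by (intro mult_left_mono) auto
  finally show ?thesis .
qed

lemma wsup_op_not_bloch_if_nonconstant: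
  fixes p \<alpha> :: real and w \<phi> :: "complex \<Rightarrow> complex"
  assumes p: "0 < p" and \<alpha>: "\<alpha> > -1" and whol: "w holomorphic_on disc"
    and z1: "z1 \<in> disc" "w z1 \<noteq> 0"
    and phol: "\<phi> holomorphic_on UNIV" and nc: "\<not> (\<exists>c. \<forall>z. \<phi> z = c)"
  shows "\<exists>f\<in>bergman_space p \<alpha>. wsup_op \<phi> w f \<notin> bloch_space"
proof -
  define \<gamma> where "\<gamma> = (1 + min \<alpha> 0) / (2 * p)"
  define g where "g n = \<gamma> * (1 - (1/2)^n)" for n
  have "\<gamma> > 0"
    using p \<alpha> by (simp add: \<gamma>_def)
  then have g: "0 \<le> g n" "g n \<le> \<gamma>" "g n < g (Suc n)" for n
    by (auto simp: g_def power_le_one)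
  obtain c u \<tau> where "c 0 = 0" and u: "\<And>n. cmod (u n) = 1" and "\<And>n. 0 < \<tau> n" "\<And>n. \<tau> n \<le> 1"
    and \<tau>_dec: "\<And>n. \<tau> (Suc n) \<le> \<tau> n" and c: "\<And>n. cmod (c (Suc n)) \<le> (1/2)^Suc n * \<tau> n"
    and large: "\<And>n. \<exists>K. cmod (w z1) \<le> cmod (w (dyadic_point K (u (Suc n)))) \<and>
       (\<forall>e. cmod e \<le> \<tau> (Suc n) * 2 powr (real K * \<gamma>) \<longrightarrow>
          real n * (real K + 1) - 1 \<le>
            cmod (\<phi> ((\<Sum>j<Suc (Suc n). c j * power_kernel (g j) (u j) (dyadic_point K (u (Suc n)))) + e)))"
    using kernel_sequence_exists[where g = g and \<gamma> = \<gamma>, OF phol nc whol z1(1) g(1) g(3)] by blast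
  note c_tail = coefficient_tail_bound[of \<tau> c, OF \<tau>_dec c]
  have c_bound: "cmod (c j) \<le> (1/2)^j" for j
  proof (cases j)
    case (Suc k)
    then have "cmod (c j) \<le> (1/2)^j * \<tau> 0"
      using c_tail[of 0 j] by simp
    also have "\<dots> \<le> (1/2)^j"
      using \<open>\<tau> 0 \<le> 1\<close> by (simp add: mult_left_le)
    finally show ?thesis .
  qed (simp add: \<open>c 0 = 0\<close>)
  define f where "f z = (\<Sum>j. c j * power_kernel (g j) (u j) z)" for z
  have "f \<in> bergman_space p \<alpha>"
    unfolding f_def using g(2)
    by (intro kernel_series_in_bergman_space[OF p \<alpha> c_bound u g(1)]) (simp add: \<gamma>_def)
  moreover have "wsup_op \<phi> w f \<notin> bloch_space"
  proof (rule not_in_bloch_space_if_fast_dyadic_growth)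
    show "cmod (w z1) > 0"
      using z1 by simp
    fix n
    obtain K where K: "cmod (w z1) \<le> cmod (w (dyadic_point K (u (Suc n))))"
      and K_large: "\<And>e. cmod e \<le> \<tau> (Suc n) * 2 powr (real K * \<gamma>) \<Longrightarrow> real n * (real K + 1) - 1 \<le>
          cmod (\<phi> ((\<Sum>j<Suc (Suc n). c j * power_kernel (g j) (u j) (dyadic_point K (u (Suc n)))) + e))"
      using large[of n] by blast
    define a where "a = dyadic_point K (u (Suc n))"
    define S where "S = (\<Sum>j<Suc (Suc n). c j * power_kernel (g j) (u j) a)"
    have "a \<in> disc"
      unfolding a_def by (rule dyadic_point_in_disc[OF u])
    have "cmod (f a - S) \<le> 2 * (1/2)^Suc (Suc n) * \<tau> (Suc n) * (1 - cmod a) powr (-\<gamma>)"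
      unfolding f_def S_def
      by (rule kernel_series_tail_bound(2)[OF _ u g(1,2) \<open>a \<in> disc\<close>]) (simp add: c_tail)
    also have "\<dots> \<le> \<tau> (Suc n) * 2 powr (real K * \<gamma>)"
      using \<open>0 < \<tau> (Suc n)\<close> power_le_one[of "1/2::real" n]
      by (simp add: a_def norm_dyadic_point u half_power_powr)
    finally have \<phi>_large: "real n * (real K + 1) - 1 \<le> cmod (\<phi> (f a))"
      using K_large[of "f a - S"] by (simp add: a_def S_def)
    have "cmod (w z1) * (real n * (real K + 1) - 1) \<le> cmod (w z1) * cmod (\<phi> (f a))"
      using \<phi>_large by (intro mult_left_mono) auto
    also have "\<dots> \<le> cmod (w a) * cmod (\<phi> (f a))"
      using K by (intro mult_right_mono) (auto simp: a_def)
    also have "\<dots> = cmod (wsup_op \<phi> w f a)"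
      by (simp add: wsup_op_def norm_mult)
    finally have "cmod (w z1) * (real n * (real K + 1) - 1) \<le> cmod (wsup_op \<phi> w f a)" .
    then show "\<exists>K u. cmod u = 1 \<and> cmod (w z1) * (real n * (real K + 1) - 1) \<le> cmod (wsup_op \<phi> w f (dyadic_point K u))"
      using u unfolding a_def by blast
  qed
  ultimately show ?thesis
    by blast
qed

theorem theorem1:
  fixes p \<alpha> :: real and w \<phi> :: "complex \<Rightarrow> complex"
  assumes "0 < p" and "\<alpha> > -1"
    and "w holomorphic_on disc" and "\<exists>z\<in>disc. w z \<noteq> 0"
    and "\<phi> holomorphic_on UNIV" and "\<exists>z. \<phi> z \<noteq> 0"
  shows "(\<forall>f\<in>bergman_space p \<alpha>. wsup_op \<phi> w f \<in> bloch_space)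
     \<longleftrightarrow> (w \<in> bloch_space \<and> (\<exists>c. \<forall>z. \<phi> z = c))"
proof
  assume H: "\<forall>f\<in>bergman_space p \<alpha>. wsup_op \<phi> w f \<in> bloch_space"
  obtain z1 where "z1 \<in> disc" "w z1 \<noteq> 0"
    using assms(4) by blast
  then have "\<exists>c. \<forall>z. \<phi> z = c"
    using wsup_op_not_bloch_if_nonconstant[OF assms(1-3) _ _ assms(5)] H by blast
  then obtain c where c: "\<And>z. \<phi> z = c"
    by blast
  have "(\<lambda>z. 0) \<in> bergman_space p \<alpha>"
    by (rule bergman_spaceI_growth[OF assms(1,2), of _ 0 0]) (use assms(2) in auto)
  then have "wsup_op \<phi> w (\<lambda>z. 0) \<in> bloch_space"
    using H by blast
  then have "(\<lambda>z. c * w z) \<in> bloch_space"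
    by (simp add: wsup_op_def c mult.commute)
  then have "(\<lambda>z. inverse c * (c * w z)) \<in> bloch_space"
    by (rule bloch_space_cmult)
  moreover have "(\<lambda>z. inverse c * (c * w z)) = w"
    using assms(6) c by (auto simp: fun_eq_iff)
  ultimately have "w \<in> bloch_space"
    by simp
  with c show "w \<in> bloch_space \<and> (\<exists>c. \<forall>z. \<phi> z = c)"
    by blast
next
  assume "w \<in> bloch_space \<and> (\<exists>c. \<forall>z. \<phi> z = c)"
  then obtain c where "w \<in> bloch_space" "\<And>z. \<phi> z = c"
    by blast
  then show "\<forall>f\<in>bergman_space p \<alpha>. wsup_op \<phi> w f \<in> bloch_space"
    using bloch_space_cmult[of w c] by (simp add: wsup_op_def mult.commute)
qed

end
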